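(* Let $n\ge 2$ and let $G$ be the graph obtained from the complete graph $K_n$ by adding, for each edge $e$ of $K_n$, a new vertex $v_e$ adjacent exactly to the two endpoints of $e$. Then $G$ is well-bicovered.
   Context: All graphs are finite and simple; "subgraph" means induced subgraph. A graph is well-bicovered if every vertex-inclusion-maximal induced bipartite subgraph has the same order. *)

theory Defs
  imports Main
begin

text \<open>Subgraphs are induced subgraphs, so an
induced subgraph is determined by its vertex set S \<subseteq> V.\<close>

definition simple_graph :: "'a set \<Rightarrow> ('a \<Rightarrow> 'a \<Rightarrow> bool) \<Rightarrow> bool" where
  "simple_graph V E \<longleftrightarrow> finite V \<and> (\<forall>x y. E x y \<longrightarrow> x \<in> V \<and> y \<in> V)
     \<and> (\<forall>x y. E x y \<longrightarrow> E y x) \<and> (\<forall>x. \<not> E x x)"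

definition induced_bipartite :: "('a \<Rightarrow> 'a \<Rightarrow> bool) \<Rightarrow> 'a set \<Rightarrow> bool" where
  "induced_bipartite E S \<longleftrightarrow> (\<exists>A B. A \<union> B = S \<and> A \<inter> B = {}
      \<and> (\<forall>x\<in>A. \<forall>y\<in>A. \<not> E x y) \<and> (\<forall>x\<in>B. \<forall>y\<in>B. \<not> E x y))"

definition maximal_induced_bipartite :: "'a set \<Rightarrow> ('a \<Rightarrow> 'a \<Rightarrow> bool) \<Rightarrow> 'a set \<Rightarrow> bool" where
  "maximal_induced_bipartite V E S \<longleftrightarrow> S \<subseteq> V \<and> induced_bipartite E S
      \<and> (\<forall>T. S \<subset> T \<and> T \<subseteq> V \<longrightarrow> \<not> induced_bipartite E T)"

definition well_bicovered :: "'a set \<Rightarrow> ('a \<Rightarrow> 'a \<Rightarrow> bool) \<Rightarrow> bool" where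
  "well_bicovered V E \<longleftrightarrow> (\<forall>S T. maximal_induced_bipartite V E S
      \<longrightarrow> maximal_induced_bipartite V E T \<longrightarrow> card S = card T)"

text \<open>K_n on vertices Inl 0..Inl (n-1); for each edge e = {i,j} of K_n a new vertex Inr e
adjacent exactly to Inl i and Inl j.\<close>
definition Kn_verts :: "nat \<Rightarrow> (nat + nat set) set" where
  "Kn_verts n = Inl ` {..<n} \<union> Inr ` {e. e \<subseteq> {..<n} \<and> card e = 2}"

fun Kn_adj :: "nat \<Rightarrow> (nat + nat set) \<Rightarrow> (nat + nat set) \<Rightarrow> bool" where
  "Kn_adj n (Inl i) (Inl j) \<longleftrightarrow> i < n \<and> j < n \<and> i \<noteq> j"
| "Kn_adj n (Inl i) (Inr e) \<longleftrightarrow> e \<subseteq> {..<n} \<and> card e = 2 \<and> i \<in> e"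
| "Kn_adj n (Inr e) (Inl i) \<longleftrightarrow> e \<subseteq> {..<n} \<and> card e = 2 \<and> i \<in> e"
| "Kn_adj n (Inr e) (Inr f) \<longleftrightarrow> False"

end

theory Submission
  imports Defs
begin

text \<open>A maximal induced bipartite set S meets the clique K_n in one or two vertices: three
would span a triangle, and if there were none any clique vertex could be added. Write this
clique part as {a, b}, with a = b allowed. The edge vertex v_{ab} is not in S, since it would
close a triangle. Every other edge vertex is in S, because a set whose clique part lies in
{a, b} and which avoids v_{ab} is bipartite with sides {a} \<union> {v_e | a \<notin> e} and
{b} \<union> {v_e | a \<in> e}. So S consists of {a, b} and all edge vertices except v_{ab}, and
|S| = |E(K_n)| + 1 whether or not a = b.\<close>

definition Kn_edges :: "nat \<Rightarrow> nat set set" where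
  "Kn_edges n = {e. e \<subseteq> {..<n} \<and> card e = 2}"

lemma finite_Kn_edges: "finite (Kn_edges n)"
  unfolding Kn_edges_def by (rule finite_subset[of _ "Pow {..<n}"]) auto

lemma Kn_verts_eq: "Kn_verts n = {..<n} <+> Kn_edges n"
  by (simp add: Kn_verts_def Kn_edges_def Plus_def)

lemma sum_set_eq_Plus: "A = {x. Inl x \<in> A} <+> {y. Inr y \<in> A}"
proof (rule set_eqI)
  show "z \<in> A \<longleftrightarrow> z \<in> {x. Inl x \<in> A} <+> {y. Inr y \<in> A}" for z
    by (cases z) auto
qed

lemma induced_bipartite_triangle_free:
  assumes "induced_bipartite E T" "x \<in> T" "y \<in> T" "z \<in> T"
  shows "\<not> (E x y \<and> E y z \<and> E x z)"
  using assms unfolding induced_bipartite_def by blast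

lemma maximal_induced_bipartite_insert:
  assumes "maximal_induced_bipartite V E S" "x \<in> V" "x \<notin> S"
  shows "\<not> induced_bipartite E (insert x S)"
  using assms unfolding maximal_induced_bipartite_def by blast

lemma induced_bipartite_Kn_adjI:
  assumes clique_part: "{i. Inl i \<in> T} \<subseteq> {a, b}" and "Inr {a, b} \<notin> T"
  shows "induced_bipartite (Kn_adj n) T"
proof -
  define A where "A = {x \<in> T. x = Inl a \<or> (\<exists>e. x = Inr e \<and> a \<notin> e)}"
  have "\<not> Kn_adj n x y" if "x \<in> A" "y \<in> A" for x y
    using that unfolding A_def by auto
  moreover have "\<not> Kn_adj n x y" if "x \<in> T - A" "y \<in> T - A" for x y
    using that clique_part assms(2) unfolding A_def
    by (cases x; cases y) (auto simp: card_2_iff doubleton_eq_iff insert_commute)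
  moreover have "A \<subseteq> T"
    by (simp add: A_def)
  ultimately show ?thesis
    unfolding induced_bipartite_def by (intro exI[of _ A] exI[of _ "T - A"]) blast
qed

context
  fixes n :: nat and S :: "(nat + nat set) set"
  assumes maximal: "maximal_induced_bipartite (Kn_verts n) (Kn_adj n) S"
begin

private lemma maximal_Kn_bipartite: "induced_bipartite (Kn_adj n) S"
  using maximal by (simp add: maximal_induced_bipartite_def)

lemma maximal_Kn_parts_subset:
  "{i. Inl i \<in> S} \<subseteq> {..<n}" "{e. Inr e \<in> S} \<subseteq> Kn_edges n"
  using maximal by (auto simp: maximal_induced_bipartite_def Kn_verts_eq)

lemma maximal_Kn_clique_part_doubleton:
  assumes "0 < n"
  obtains a b where "{i. Inl i \<in> S} = {a, b}"
proof -
  have "{i. Inl i \<in> S} \<noteq> {}"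
  proof
    assume empty: "{i. Inl i \<in> S} = {}"
    have "Inr {0, 0} \<notin> S"
      using maximal_Kn_parts_subset(2) by (auto simp: Kn_edges_def)
    with empty have "induced_bipartite (Kn_adj n) (insert (Inl 0) S)"
      by (intro induced_bipartite_Kn_adjI[of _ 0 0]) auto
    moreover have "Inl 0 \<in> Kn_verts n"
      using assms by (auto simp: Kn_verts_eq)
    moreover have "Inl 0 \<notin> S"
      using empty by blast
    ultimately show False
      using maximal_induced_bipartite_insert[OF maximal] by blast
  qed
  then obtain a where a: "Inl a \<in> S"
    by blast
  show thesis
  proof (cases "{i. Inl i \<in> S} \<subseteq> {a}")
    case True
    with a show thesis
      by (intro that[of a a]) auto
  next
    case False
    then obtain b where b: "Inl b \<in> S" "b \<noteq> a"
      by blast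
    have "c \<in> {a, b}" if c: "Inl c \<in> S" for c
    proof -
      have "a < n" "b < n" "c < n"
        using maximal_Kn_parts_subset(1) a b(1) c by auto
      then show ?thesis
        using induced_bipartite_triangle_free[OF maximal_Kn_bipartite a b(1) c] b(2) by auto
    qed
    with a b show thesis
      by (intro that[of a b]) auto
  qed
qed

lemma maximal_Kn_edge_part:
  assumes "0 < n"
  shows "{e. Inr e \<in> S} = Kn_edges n - {{i. Inl i \<in> S}}"
proof -
  obtain a b where ab: "{i. Inl i \<in> S} = {a, b}"
    using maximal_Kn_clique_part_doubleton[OF assms] .
  have no_triangle: "Inr {a, b} \<notin> S"
  proof
    assume ab_in: "Inr {a, b} \<in> S"
    then have "a \<noteq> b" "a < n" "b < n"
      using maximal_Kn_parts_subset ab by (auto simp: Kn_edges_def)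
    then show False
      using induced_bipartite_triangle_free[OF maximal_Kn_bipartite _ _ ab_in, of "Inl a" "Inl b"]
        ab ab_in by (auto simp: card_2_iff)
  qed
  have "Inr e \<in> S" if e: "e \<in> Kn_edges n" "e \<noteq> {a, b}" for e
  proof (rule ccontr)
    assume "Inr e \<notin> S"
    moreover have "induced_bipartite (Kn_adj n) (insert (Inr e) S)"
      using ab no_triangle e(2) by (intro induced_bipartite_Kn_adjI) auto
    moreover have "Inr e \<in> Kn_verts n"
      using e(1) by (auto simp: Kn_verts_eq)
    ultimately show False
      using maximal_induced_bipartite_insert[OF maximal] by blast
  qed
  with maximal_Kn_parts_subset(2) no_triangle show ?thesis
    unfolding ab by blast
qed

lemma card_maximal_Kn:
  assumes "0 < n"
  shows "card S = card (Kn_edges n) + 1"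
proof -
  obtain a b where ab: "{i. Inl i \<in> S} = {a, b}"
    using maximal_Kn_clique_part_doubleton[OF assms] .
  have "card S = card ({i. Inl i \<in> S} <+> {e. Inr e \<in> S})"
    using sum_set_eq_Plus[of S] by (rule arg_cong)
  also have "\<dots> = card {a, b} + card (Kn_edges n - {{a, b}})"
    by (simp add: card_Plus finite_Kn_edges ab maximal_Kn_edge_part[OF assms])
  also have "\<dots> = card (Kn_edges n) + 1"
  proof (cases "a = b")
    case True
    then show ?thesis
      by (simp add: Kn_edges_def)
  next
    case False
    then have "{a, b} \<in> Kn_edges n"
      using maximal_Kn_parts_subset(1) ab by (auto simp: Kn_edges_def)
    moreover from this have "card (Kn_edges n) > 0"
      using finite_Kn_edges card_gt_0_iff by blast
    ultimately show ?thesis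
      using False by (simp add: finite_Kn_edges card_Diff_singleton)
  qed
  finally show ?thesis .
qed

end

theorem mainTheorem13:
  fixes n :: nat
  assumes "n \<ge> 2"
  shows "well_bicovered (Kn_verts n) (Kn_adj n)"
  using card_maximal_Kn assms by (simp add: well_bicovered_def)

end
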